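(* For every $n\in\mathbb N$, there is a unital complete order isomorphism between the operator system $C(S^1)^{(n)}$ of $n\times n$ complex Toeplitz matrices and the operator system dual $\left(C(S^1)_{(n)}\right)^d$; that is, $C(S^1)^{(n)}\simeq \left(C(S^1)_{(n)}\right)^d$.
   Context: $S^1\subset\mathbb C$ is the unit circle and $C(S^1)$ the C$^*$-algebra of continuous functions $S^1\to\mathbb C$; for $f\in C(S^1)$, $\hat f(k)=\frac{1}{2\pi}\int_0^{2\pi} f(e^{i\theta})e^{-ik\theta}d\theta$. $C(S^1)_{(n)}$ is the space of $f\in C(S^1)$ with $\hat f(k)=0$ for all $|k|\ge n$ (trigonometric polynomials $\sum_{k=-n+1}^{n-1}\alpha_kz^k$), an operator system whose matrix ordering is: $F\in M_p(C(S^1)_{(n)})$ is positive iff $F(z)$ is positive semidefinite for every $z\in S^1$; its Archimedean order unit is the constant function $1$. $C(S^1)^{(n)}$ is the operator subsystem of $M_n(\mathbb C)$ of Toeplitz matrices $[\tau_{k-\ell}]_{k,\ell=0}^{n-1}$, with matrix ordering inherited from $M_p(M_n(\mathbb C))$ and order unit the identity matrix. For a finite-dimensional operator system $\mathcal R$, its dual $\mathcal R^d$ is the space of linear functionals on $\mathcal R$ with involution $\varphi^*(r)=\overline{\varphi(r^* )}$ and matrix ordering: $[\varphi_{ij}]\in M_p(\mathcal R^d)$ is positive iff $r\mapsto[\varphi_{ij}(r)]$ is a completely positive map $\mathcal R\to M_p(\mathbb C)$. The dual $\left(C(S^1)_{(n)}\right)^d$ is made an operator system with Archimedean order unit the faithful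 state $f\mapsto\hat f(0)$. A unital complete order isomorphism is a linear bijection $\phi$ mapping order unit to order unit such that $\phi$ and $\phi^{-1}$ are completely positive. *)

theory Defs
  imports "HOL-Analysis.Analysis"
begin

text \<open>Matrices are represented as functions nat => nat => complex (entries outside
the index range are irrelevant / zero).  Functions on the unit circle are represented
as functions complex => complex that vanish off the unit circle.\<close>

definition psd :: "'i set \<Rightarrow> ('i \<Rightarrow> 'i \<Rightarrow> complex) \<Rightarrow> bool" where
  "psd I A \<longleftrightarrow> (\<forall>v::'i \<Rightarrow> complex.
      Im (\<Sum>a\<in>I. \<Sum>b\<in>I. cnj (v a) * A a b * v b) = 0 \<and>
      Re (\<Sum>a\<in>I. \<Sum>b\<in>I. cnj (v a) * A a b * v b) \<ge> 0)"

definition fourier_coeff :: "(complex \<Rightarrow> complex) \<Rightarrow> int \<Rightarrow> complex" where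
  "fourier_coeff f k = (1 / (2 * pi)) *
     integral {0..2*pi} (\<lambda>\<theta>. f (cis \<theta>) * cis (- (real_of_int k * \<theta>)))"

definition trigpoly :: "nat \<Rightarrow> (complex \<Rightarrow> complex) set" where
  "trigpoly n = {f. \<exists>\<alpha>::int \<Rightarrow> complex. \<forall>z. f z =
      (if cmod z = 1 then (\<Sum>k\<in>{-(int n - 1)..int n - 1}. \<alpha> k * z powi k) else 0)}"

definition pos_trig :: "nat \<Rightarrow> (nat \<Rightarrow> nat \<Rightarrow> (complex \<Rightarrow> complex)) \<Rightarrow> bool" where
  "pos_trig p F \<longleftrightarrow> (\<forall>z. cmod z = 1 \<longrightarrow> psd {..<p} (\<lambda>i j. F i j z))"

definition trig_dual :: "nat \<Rightarrow> ((complex \<Rightarrow> complex) \<Rightarrow> complex) set" where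
  "trig_dual n = {\<psi>. (\<forall>f\<in>trigpoly n. \<forall>g\<in>trigpoly n. \<forall>a b.
        \<psi> (\<lambda>z. a * f z + b * g z) = a * \<psi> f + b * \<psi> g) \<and>
      (\<forall>f. f \<notin> trigpoly n \<longrightarrow> \<psi> f = 0)}"

text \<open>Positivity in M_p((C(S^1)_(n))^d): the map r |-> [psi_ij(r)] is completely positive.\<close>
definition pos_dual :: "nat \<Rightarrow> nat \<Rightarrow> (nat \<Rightarrow> nat \<Rightarrow> ((complex \<Rightarrow> complex) \<Rightarrow> complex)) \<Rightarrow> bool" where
  "pos_dual n p \<Psi> \<longleftrightarrow> (\<forall>q G. (\<forall>k<q. \<forall>l<q. G k l \<in> trigpoly n) \<longrightarrow> pos_trig q G \<longrightarrow>
      psd ({..<p} \<times> {..<q}) (\<lambda>(i, k) (j, l). \<Psi> i j (G k l)))"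

text \<open>The faithful state f |-> f^(0), the order unit of the dual.\<close>
definition fourier_state :: "nat \<Rightarrow> (complex \<Rightarrow> complex) \<Rightarrow> complex" where
  "fourier_state n f = (if f \<in> trigpoly n then fourier_coeff f 0 else 0)"

definition toeplitz :: "nat \<Rightarrow> (nat \<Rightarrow> nat \<Rightarrow> complex) set" where
  "toeplitz n = {A. \<exists>\<tau>::int \<Rightarrow> complex. \<forall>k l.
      A k l = (if k < n \<and> l < n then \<tau> (int k - int l) else 0)}"

definition id_mat :: "nat \<Rightarrow> nat \<Rightarrow> nat \<Rightarrow> complex" where
  "id_mat n = (\<lambda>k l. if k = l \<and> k < n then 1 else 0)"

text \<open>Positivity in M_p(C(S^1)^(n)), inherited from M_p(M_n(C)) = M_{pn}(C).\<close>
definition pos_toep :: "nat \<Rightarrow> nat \<Rightarrow> (nat \<Rightarrow> nat \<Rightarrow> (nat \<Rightarrow> nat \<Rightarrow> complex)) \<Rightarrow> bool" where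
  "pos_toep n p X \<longleftrightarrow> psd ({..<p} \<times> {..<n}) (\<lambda>(i, k) (j, l). X i j k l)"

definition unital_coi :: "nat \<Rightarrow> ((nat \<Rightarrow> nat \<Rightarrow> complex) \<Rightarrow> ((complex \<Rightarrow> complex) \<Rightarrow> complex)) \<Rightarrow> bool" where
  "unital_coi n \<phi> \<longleftrightarrow>
     bij_betw \<phi> (toeplitz n) (trig_dual n) \<and>
     (\<forall>A\<in>toeplitz n. \<forall>B\<in>toeplitz n. \<forall>a b.
        \<phi> (\<lambda>k l. a * A k l + b * B k l) = (\<lambda>f. a * \<phi> A f + b * \<phi> B f)) \<and>
     \<phi> (id_mat n) = fourier_state n \<and>
     (\<forall>p X. (\<forall>i<p. \<forall>j<p. X i j \<in> toeplitz n) \<longrightarrow>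
        (pos_toep n p X \<longleftrightarrow> pos_dual n p (\<lambda>i j. \<phi> (X i j))))"

end

theory Submission
  imports Defs "HOL-Library.Complex_Order"
begin

text \<open>The isomorphism sends a Toeplitz matrix with symbol \<open>\<tau>\<close> to the functional
  \<open>f \<mapsto> \<Sum>\<^sub>m \<tau>(m) fourier_coeff f (-m)\<close>; it is unital since for the identity only \<open>\<tau>(0) = 1\<close>
  survives.

  Positivity in the dual implies positivity of the Toeplitz matrices: evaluate the dual matrix on
  the matrix of monomials \<open>[z\<^sup>l\<^sup>-\<^sup>k]\<^sub>k\<^sub>l\<close>, which is psd on the circle and returns the
  Toeplitz entries. Conversely, let \<open>X\<close> be a psd block Toeplitz matrix and \<open>G\<close> a matrix of
  trigonometric polynomials of degree \<open>< n\<close> that is psd on the circle. For every \<open>N \<ge> n\<close>, \<open>X\<close>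
  extends to a psd matrix of size \<open>N\<close> agreeing with it on the band \<open>\<bar>a - b\<bar> < n\<close>, because
  psd matrices agreeing on an overlap can be glued; and the block Toeplitz matrix of the Fourier
  coefficients of \<open>G\<close> is psd, being an average of \<open>G\<close> over roots of unity. The partial trace
  of the Schur product of these two matrices is \<open>N\<close> times the Fejer mean
  \<open>\<Sum>\<^sub>m (1 - \<bar>m\<bar>/N) \<tau>(m) \<alpha>(-m)\<close> of the pairing matrix, which is therefore a limit of psd
  matrices.\<close>

section \<open>Positive semidefinite matrices\<close>

definition quad_form :: "'i set \<Rightarrow> ('i \<Rightarrow> 'i \<Rightarrow> complex) \<Rightarrow> ('i \<Rightarrow> complex) \<Rightarrow> complex" where
  "quad_form I A v = (\<Sum>a\<in>I. \<Sum>b\<in>I. cnj (v a) * A a b * v b)"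

lemma psd_iff_quad_form: "psd I A \<longleftrightarrow> (\<forall>v. 0 \<le> quad_form I A v)"
  by (auto simp: psd_def quad_form_def less_eq_complex_def)

lemma psdI: "(\<And>v. 0 \<le> quad_form I A v) \<Longrightarrow> psd I A"
  by (simp add: psd_iff_quad_form)

lemma psdD: "psd I A \<Longrightarrow> 0 \<le> quad_form I A v"
  by (simp add: psd_iff_quad_form)

lemma quad_form_cong:
  "(\<And>a b. a \<in> I \<Longrightarrow> b \<in> I \<Longrightarrow> A a b = B a b) \<Longrightarrow> (\<And>a. a \<in> I \<Longrightarrow> v a = w a) \<Longrightarrow>
    quad_form I A v = quad_form I B w"
  unfolding quad_form_def by (intro sum.cong refl) auto

lemma psd_cong: "(\<And>a b. a \<in> I \<Longrightarrow> b \<in> I \<Longrightarrow> A a b = B a b) \<Longrightarrow> psd I A \<longleftrightarrow> psd I B"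
  using quad_form_cong[of I A B] by (simp add: psd_iff_quad_form)

lemma quad_form_add: "quad_form I (\<lambda>a b. A a b + B a b) v = quad_form I A v + quad_form I B v"
  unfolding quad_form_def by (simp add: distrib_left distrib_right sum.distrib)

lemma quad_form_diff: "quad_form I (\<lambda>a b. A a b - B a b) v = quad_form I A v - quad_form I B v"
  unfolding quad_form_def by (simp add: right_diff_distrib left_diff_distrib sum_subtractf)

lemma quad_form_scale: "quad_form I (\<lambda>a b. c * A a b) v = c * quad_form I A v"
  unfolding quad_form_def by (simp add: sum_distrib_left ac_simps)

lemma quad_form_sum: "quad_form I (\<lambda>a b. \<Sum>r\<in>R. F r a b) v = (\<Sum>r\<in>R. quad_form I (F r) v)"
  unfolding quad_form_def by (simp add: sum_distrib_left sum_distrib_right sum.swap[of _ R] ac_simps)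

lemma quad_form_rank_one:
  "quad_form I (\<lambda>a b. cnj (r a) * r b) v = cnj (\<Sum>b\<in>I. r b * v b) * (\<Sum>b\<in>I. r b * v b)"
proof -
  have "quad_form I (\<lambda>a b. cnj (r a) * r b) v = (\<Sum>a\<in>I. cnj (r a * v a)) * (\<Sum>b\<in>I. r b * v b)"
    unfolding quad_form_def sum_product by (intro sum.cong refl) (simp add: ac_simps)
  then show ?thesis by simp
qed

lemma quad_form_diag_scale:
  "quad_form I (\<lambda>a b. cnj (d a) * A a b * d b) v = quad_form I A (\<lambda>a. d a * v a)"
  unfolding quad_form_def by (simp add: ac_simps)

lemma quad_form_two:
  assumes "a \<noteq> b"
  shows "quad_form {a, b} A v = cnj (v a) * A a a * v a + cnj (v a) * A a b * v b
     + (cnj (v b) * A b a * v a + cnj (v b) * A b b * v b)"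
  using assms unfolding quad_form_def by simp

lemma quad_form_insert:
  assumes "finite S" "x \<notin> S"
  shows "quad_form (insert x S) A v = cnj (v x) * A x x * v x + cnj (v x) * (\<Sum>b\<in>S. A x b * v b)
     + (\<Sum>a\<in>S. cnj (v a) * A a x) * v x + quad_form S A v"
  using assms unfolding quad_form_def
  by (simp add: sum.distrib sum_distrib_left sum_distrib_right ac_simps)

lemma quad_form_zero_outside:
  assumes "finite I" "J \<subseteq> I" "\<And>a. a \<in> I - J \<Longrightarrow> v a = 0"
  shows "quad_form I A v = quad_form J A v"
proof -
  have "quad_form I A v = (\<Sum>a\<in>I. \<Sum>b\<in>J. cnj (v a) * A a b * v b)"
    unfolding quad_form_def using assms by (intro sum.cong refl sum.mono_neutral_right) auto
  also have "\<dots> = quad_form J A v"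
    unfolding quad_form_def using assms by (intro sum.mono_neutral_right) auto
  finally show ?thesis .
qed

lemma psd_zero [simp]: "psd I (\<lambda>a b. 0)"
  by (simp add: psd_iff_quad_form quad_form_def)

lemma psd_add: "psd I A \<Longrightarrow> psd I B \<Longrightarrow> psd I (\<lambda>a b. A a b + B a b)"
  by (simp add: psd_iff_quad_form quad_form_add)

lemma psd_sum: "(\<And>r. r \<in> R \<Longrightarrow> psd I (F r)) \<Longrightarrow> psd I (\<lambda>a b. \<Sum>r\<in>R. F r a b)"
  by (simp add: psd_iff_quad_form quad_form_sum sum_nonneg)

lemma psd_rank_one:
  assumes "0 \<le> c"
  shows "psd I (\<lambda>a b. c * (cnj (r a) * r b))"
proof (rule psdI)
  fix v
  have cs: "0 \<le> cnj s * s" for s :: complex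
    by (simp add: less_eq_complex_def)
  show "0 \<le> quad_form I (\<lambda>a b. c * (cnj (r a) * r b)) v"
    unfolding quad_form_scale quad_form_rank_one by (rule mult_nonneg_nonneg[OF assms cs])
qed

lemma psd_gram_form: "psd I (\<lambda>a b. \<Sum>t<D. cnj (g t a) * g t b)"
  by (intro psd_sum psd_rank_one[of 1, simplified]) (simp add: less_eq_complex_def)

lemma psd_diag_scale: "psd I A \<Longrightarrow> psd I (\<lambda>a b. cnj (d a) * A a b * d b)"
  by (simp add: psd_iff_quad_form quad_form_diag_scale)

lemma psd_subset:
  assumes "finite I" "J \<subseteq> I" "psd I A"
  shows "psd J A"
proof (rule psdI)
  fix v :: "_ \<Rightarrow> complex"
  let ?v = "\<lambda>a. if a \<in> J then v a else 0"
  have "quad_form J A v = quad_form I A ?v"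
    using quad_form_zero_outside[OF assms(1,2), of ?v A] quad_form_cong[of J A A v ?v] by simp
  then show "0 \<le> quad_form J A v" using psdD[OF assms(3)] by simp
qed

lemma psd_zero_extend:
  assumes "finite I" "J \<subseteq> I" "psd J A"
  shows "psd I (\<lambda>a b. if a \<in> J \<and> b \<in> J then A a b else 0)"
proof (rule psdI)
  fix v
  let ?A = "\<lambda>a b. if a \<in> J \<and> b \<in> J then A a b else 0"
  have "quad_form I ?A v = (\<Sum>a\<in>I. \<Sum>b\<in>J. cnj (v a) * ?A a b * v b)"
    unfolding quad_form_def using assms(1,2) by (intro sum.cong refl sum.mono_neutral_right) auto
  also have "\<dots> = (\<Sum>a\<in>J. \<Sum>b\<in>J. cnj (v a) * ?A a b * v b)"
    using assms(1,2) by (intro sum.mono_neutral_right) auto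
  also have "\<dots> = quad_form J A v" unfolding quad_form_def by (intro sum.cong refl) auto
  finally show "0 \<le> quad_form I ?A v" using psdD[OF assms(3)] by simp
qed

lemma psd_diag_nonneg:
  assumes "finite I" "psd I A" "a \<in> I"
  shows "0 \<le> A a a"
proof -
  have "psd {a} A" using assms by (intro psd_subset[OF assms(1) _ assms(2)]) auto
  from psdD[OF this, of "\<lambda>_. 1"] show ?thesis by (simp add: quad_form_def)
qed

lemma psd_hermitian:
  assumes "finite I" "psd I A" "a \<in> I" "b \<in> I"
  shows "A b a = cnj (A a b)"
proof (cases "a = b")
  case True
  with psd_diag_nonneg[OF assms(1-3)] show ?thesis
    by (auto simp: less_eq_complex_def complex_eq_iff)
next
  case False
  have P: "psd {a, b} A" using assms by (intro psd_subset[OF assms(1) _ assms(2)]) auto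
  have "Im (A a a) = 0" "Im (A b b) = 0"
    using psd_diag_nonneg[OF assms(1,2)] assms(3,4) by (auto simp: less_eq_complex_def)
  moreover have "0 \<le> quad_form {a, b} A (\<lambda>_. 1)" "0 \<le> quad_form {a, b} A (\<lambda>c. if c = a then 1 else \<i>)"
    using psdD[OF P] by blast+
  ultimately show ?thesis
    using False by (simp add: quad_form_two less_eq_complex_def complex_eq_iff)
qed

lemma psd_zero_row:
  assumes "finite I" "psd I A" "a \<in> I" "b \<in> I" "A a a = 0"
  shows "A a b = 0"
proof (rule ccontr)
  assume nz: "A a b \<noteq> 0"
  with assms(5) have ab: "a \<noteq> b" by auto
  have P: "psd {a, b} A" using assms by (intro psd_subset[OF assms(1) _ assms(2)]) auto
  define c where "c = A a b"
  have ba: "A b a = cnj c" using psd_hermitian[OF assms(1-4)] c_def by simp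
  define K where "K = (Re c)\<^sup>2 + (Im c)\<^sup>2"
  have "K > 0" using nz unfolding K_def c_def by (simp add: complex_eq_iff sum_power2_gt_zero_iff)
  define R where "R = (\<bar>Re (A b b)\<bar> + 1) / (2 * K)"
  have "0 \<le> Re (quad_form {a, b} A (\<lambda>y. if y = a then - (complex_of_real R * c) else 1))"
    using psdD[OF P] by (simp add: less_eq_complex_def)
  also have "\<dots> = Re (A b b) - 2 * R * K"
    using ab assms(5) ba unfolding quad_form_two[OF ab] c_def[symmetric] K_def
    by (simp add: algebra_simps power2_eq_square)
  also have "2 * R * K = \<bar>Re (A b b)\<bar> + 1" unfolding R_def using \<open>K > 0\<close> by simp
  finally show False by linarith
qed

lemma psd_schur_complement:
  assumes fin: "finite S" and x: "x \<notin> S" and P: "psd (insert x S) A"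
  shows "psd S (\<lambda>a b. A a b - A a x * A x b / A x x)"
proof (cases "A x x = 0")
  case True
  then show ?thesis using psd_subset[OF _ subset_insertI P] fin by simp
next
  case False
  show ?thesis
  proof (rule psdI)
    fix v
    define d where "d = A x x"
    define s where "s = (\<Sum>b\<in>S. A x b * v b)"
    define v' where "v' = (\<lambda>c. if c = x then - s / d else v c)"
    have fi: "finite (insert x S)" using fin by simp
    have herm: "A a x = cnj (A x a)" if "a \<in> S" for a
      using psd_hermitian[OF fi P, of x a] that by simp
    have cd: "cnj d = d"
      using psd_diag_nonneg[OF fi P, of x] by (simp add: d_def less_eq_complex_def complex_eq_iff)
    have s': "(\<Sum>b\<in>S. A x b * v' b) = s" and t': "(\<Sum>a\<in>S. cnj (v' a) * A a x) = cnj s"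
      unfolding s_def v'_def using x by (auto intro!: sum.cong simp: herm mult.commute)
    have "quad_form S A v' = quad_form S A v"
      using x by (intro quad_form_cong) (auto simp: v'_def)
    then have "quad_form (insert x S) A v' =
        cnj (- s / d) * d * (- s / d) + cnj (- s / d) * s + cnj s * (- s / d) + quad_form S A v"
      using quad_form_insert[OF fin x, of A v'] s' t' by (simp add: v'_def d_def)
    also have "\<dots> = quad_form S A v - cnj s * s / d"
      using cd False by (simp add: d_def field_simps)
    also have "cnj s * s / d = quad_form S (\<lambda>a b. A a x * A x b / A x x) v"
    proof -
      have "quad_form S (\<lambda>a b. A a x * A x b / A x x) v
          = quad_form S (\<lambda>a b. inverse d * (cnj (A x a) * A x b)) v"
        by (intro quad_form_cong) (simp_all add: herm d_def field_simps)
      also have "\<dots> = inverse d * (cnj s * s)"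
        unfolding quad_form_scale quad_form_rank_one s_def ..
      finally show ?thesis by (simp add: divide_inverse ac_simps)
    qed
    finally show "0 \<le> quad_form S (\<lambda>a b. A a b - A a x * A x b / A x x) v"
      using psdD[OF P, of v'] by (simp add: quad_form_diff)
  qed
qed

text \<open>No case split on \<open>A x x = 0\<close> is needed: then the row of \<open>x\<close> vanishes, and both
  correction terms are \<open>0\<close> because division by zero yields zero.\<close>
lemma psd_pivot:
  assumes fin: "finite S" and x: "x \<notin> S" and P: "psd (insert x S) A"
    and a: "a \<in> insert x S" and b: "b \<in> insert x S"
  shows "A a b = (if a \<in> S \<and> b \<in> S then A a b - A a x * A x b / A x x else 0)
    + inverse (A x x) * (cnj (A x a) * A x b)"
proof -
  have fi: "finite (insert x S)" using fin by simp
  have herm: "A a x = cnj (A x a)" using psd_hermitian[OF fi P _ a] by simp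
  have cd: "cnj (A x x) = A x x"
    using psd_diag_nonneg[OF fi P, of x] by (simp add: less_eq_complex_def complex_eq_iff)
  show ?thesis
  proof (cases "A x x = 0")
    case True
    have "A x c = 0" if "c \<in> insert x S" for c
      using psd_zero_row[OF fi P _ that True] by simp
    with a b herm x show ?thesis by auto
  next
    case False
    with a b herm x cd show ?thesis by (auto simp: field_simps)
  qed
qed

lemma psd_gram:
  assumes "finite I" "psd I A"
  shows "\<exists>(D::nat) g. \<forall>a\<in>I. \<forall>b\<in>I. A a b = (\<Sum>t<D. cnj (g t a) * g t b)"
  using assms
proof (induction I arbitrary: A rule: finite_induct)
  case empty
  then show ?case by auto
next
  case (insert x S)
  obtain D :: nat and g where g: "\<forall>a\<in>S. \<forall>b\<in>S.
      A a b - A a x * A x b / A x x = (\<Sum>t<D. cnj (g t a) * g t b)"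
    using insert.IH[OF psd_schur_complement[OF insert.hyps insert.prems]] by blast
  define sd where "sd = complex_of_real (sqrt (Re (A x x)))"
  have "sd * sd = A x x"
    using psd_diag_nonneg[OF _ insert.prems, of x] insert.hyps
    by (simp add: sd_def less_eq_complex_def complex_eq_iff flip: of_real_mult)
  then have sd: "cnj (c / sd) * (c' / sd) = inverse (A x x) * (cnj c * c')" for c c'
    by (auto simp: sd_def field_simps)
  define g' where "g' t a = (if t < D then if a = x then 0 else g t a else A x a / sd)" for t a
  show ?case
  proof (intro exI ballI)
    fix a b assume a: "a \<in> insert x S" and b: "b \<in> insert x S"
    have "(\<Sum>t<D. cnj (g' t a) * g' t b) =
        (if a \<in> S \<and> b \<in> S then A a b - A a x * A x b / A x x else 0)"
      using a b g insert.hyps by (cases "a = x"; cases "b = x") (auto simp: g'_def)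
    moreover have "(\<Sum>t<Suc D. cnj (g' t a) * g' t b) =
        (\<Sum>t<D. cnj (g' t a) * g' t b) + cnj (A x a / sd) * (A x b / sd)"
      by (simp add: g'_def)
    ultimately show "A a b = (\<Sum>t<Suc D. cnj (g' t a) * g' t b)"
      using psd_pivot[OF insert.hyps insert.prems a b] sd by simp
  qed
qed

lemma psd_pullback:
  assumes "finite I" "psd I A" "f ` K \<subseteq> I"
  shows "psd K (\<lambda>x y. A (f x) (f y))"
proof -
  obtain D :: nat and g where g: "\<forall>a\<in>I. \<forall>b\<in>I. A a b = (\<Sum>t<D. cnj (g t a) * g t b)"
    using psd_gram[OF assms(1,2)] by blast
  show ?thesis
    using psd_gram_form[where I = K and D = D and g = "\<lambda>t x. g t (f x)"]
    by (rule iffD1[OF psd_cong, rotated]) (use g assms(3) in \<open>auto simp: image_subset_iff\<close>)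
qed

lemma psd_schur_product:
  assumes "finite I" "psd I A" "psd I B"
  shows "psd I (\<lambda>a b. A a b * B a b)"
proof (rule psdI)
  fix v
  obtain D :: nat and g where g: "\<forall>a\<in>I. \<forall>b\<in>I. A a b = (\<Sum>t<D. cnj (g t a) * g t b)"
    using psd_gram[OF assms(1,2)] by blast
  have "quad_form I (\<lambda>a b. A a b * B a b) v
      = quad_form I (\<lambda>a b. \<Sum>t<D. cnj (g t a) * B a b * g t b) v"
  proof (rule quad_form_cong)
    fix a b assume "a \<in> I" "b \<in> I"
    then have "A a b * B a b = (\<Sum>t<D. cnj (g t a) * g t b * B a b)"
      using g by (simp add: sum_distrib_right)
    then show "A a b * B a b = (\<Sum>t<D. cnj (g t a) * B a b * g t b)"
      by (simp add: ac_simps)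
  qed simp
  also have "\<dots> = (\<Sum>t<D. quad_form I B (\<lambda>a. g t a * v a))"
    unfolding quad_form_sum quad_form_diag_scale ..
  finally show "0 \<le> quad_form I (\<lambda>a b. A a b * B a b) v"
    using psdD[OF assms(3)] by (simp add: sum_nonneg)
qed

lemma psd_partial_trace:
  assumes "psd (X \<times> Y) H"
  shows "psd X (\<lambda>x x'. \<Sum>y\<in>Y. \<Sum>y'\<in>Y. H (x, y) (x', y'))"
proof (rule psdI)
  fix w
  have "quad_form X (\<lambda>x x'. \<Sum>y\<in>Y. \<Sum>y'\<in>Y. H (x, y) (x', y')) w
      = (\<Sum>x\<in>X. \<Sum>y\<in>Y. \<Sum>x'\<in>X. \<Sum>y'\<in>Y. cnj (w x) * H (x, y) (x', y') * w x')"
    unfolding quad_form_def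
    by (simp add: sum_distrib_left sum_distrib_right sum.swap[of _ X Y] ac_simps)
  also have "\<dots> = quad_form (X \<times> Y) H (\<lambda>(x, y). w x)"
    unfolding quad_form_def sum.cartesian_product' by simp
  finally show "0 \<le> quad_form X (\<lambda>x x'. \<Sum>y\<in>Y. \<Sum>y'\<in>Y. H (x, y) (x', y')) w"
    using psdD[OF assms] by simp
qed

lemma nonneg_of_linear_bound:
  fixes Q R :: complex
  assumes "\<And>N. n \<le> N \<Longrightarrow> 0 \<le> of_nat N * Q - R"
  shows "0 \<le> Q"
proof -
  have h: "Re R \<le> real N * Re Q \<and> Im R = real N * Im Q" if "n \<le> N" for N
    using assms[OF that] by (simp add: less_eq_complex_def)
  have "Im Q = 0" using h[of n] h[of "Suc n"] by (simp add: algebra_simps)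
  moreover have "Re Q \<ge> 0"
  proof (rule ccontr)
    assume neg: "\<not> Re Q \<ge> 0"
    then obtain N0 :: nat where N0: "\<bar>Re R\<bar> < real N0 * (- Re Q)"
      using ex_less_of_nat_mult[of "- Re Q" "\<bar>Re R\<bar>"] by auto
    have "real N0 * (- Re Q) \<le> real (N0 + n) * (- Re Q)"
      using neg by (intro mult_right_mono) auto
    with N0 h[of "N0 + n"] abs_ge_minus_self[of "Re R"] show False
      by (simp add: algebra_simps)
  qed
  ultimately show ?thesis by (simp add: less_eq_complex_def)
qed

lemma psd_of_linear_bound:
  assumes "\<And>N. n \<le> N \<Longrightarrow> psd I (\<lambda>a b. of_nat N * A a b - B a b)"
  shows "psd I A"
proof (rule psdI)
  fix v
  show "0 \<le> quad_form I A v"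
  proof (rule nonneg_of_linear_bound)
    fix N assume "n \<le> N"
    from psdD[OF assms[OF this], of v]
    show "0 \<le> of_nat N * quad_form I A v - quad_form I B v"
      by (simp add: quad_form_diff quad_form_scale)
  qed
qed

section \<open>Completion of psd band matrices\<close>

lemma inverse_nonneg_complex: "0 \<le> (d::complex) \<Longrightarrow> 0 \<le> inverse d"
  by (auto simp: less_eq_complex_def inverse_complex_def)

text \<open>Induction on the overlap \<open>J\<close>: pivoting both matrices at the same \<open>x \<in> J\<close> produces
  Schur complements that agree on the smaller overlap, and the same rank-one part.\<close>
lemma psd_glue:
  assumes "finite J" "finite I1" "finite I2"
    and "I1 \<inter> J = {}" "J \<inter> I2 = {}" "I1 \<inter> I2 = {}"
    and "psd (I1 \<union> J) A" "psd (J \<union> I2) B" "\<forall>a\<in>J. \<forall>b\<in>J. A a b = B a b"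
  shows "\<exists>M. psd (I1 \<union> J \<union> I2) M \<and> (\<forall>a\<in>I1 \<union> J. \<forall>b\<in>I1 \<union> J. M a b = A a b)
    \<and> (\<forall>a\<in>J \<union> I2. \<forall>b\<in>J \<union> I2. M a b = B a b)"
  using assms
proof (induction J arbitrary: A B rule: finite_induct)
  case empty
  let ?M = "\<lambda>a b. (if a \<in> I1 \<and> b \<in> I1 then A a b else 0) + (if a \<in> I2 \<and> b \<in> I2 then B a b else 0)"
  have "psd (I1 \<union> I2) ?M"
    using empty by (intro psd_add psd_zero_extend) auto
  then show ?case using empty by (intro exI[of _ ?M]) auto
next
  case (insert x J)
  let ?U1 = "I1 \<union> J" and ?U2 = "J \<union> I2" and ?U = "I1 \<union> J \<union> I2"
  have x: "x \<notin> ?U1" "x \<notin> ?U2" "x \<notin> ?U" using insert by auto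
  have PA: "psd (insert x ?U1) A" and PB: "psd (insert x ?U2) B"
    using insert.prems by (simp_all add: insert_commute)
  have fin: "finite ?U1" "finite ?U2" "finite ?U" using insert by auto
  let ?SA = "\<lambda>a b. A a b - A a x * A x b / A x x"
  let ?SB = "\<lambda>a b. B a b - B a x * B x b / B x x"
  have "\<forall>a\<in>J. \<forall>b\<in>J. ?SA a b = ?SB a b" using insert.prems by simp
  then obtain M' where M': "psd ?U M'" "\<forall>a\<in>?U1. \<forall>b\<in>?U1. M' a b = ?SA a b"
      "\<forall>a\<in>?U2. \<forall>b\<in>?U2. M' a b = ?SB a b"
    using insert.IH[OF _ _ _ _ _ psd_schur_complement[OF fin(1) x(1) PA]
        psd_schur_complement[OF fin(2) x(2) PB]] insert.prems by auto
  define r where "r a = (if a \<in> insert x ?U1 then A x a else B x a)" for a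
  have rB: "r a = B x a" if "a \<in> insert x ?U2" for a
    using that insert.prems insert.hyps unfolding r_def by auto
  have d: "B x x = A x x" using insert.prems by simp
  let ?M = "\<lambda>a b. (if a \<in> ?U \<and> b \<in> ?U then M' a b else 0) + inverse (A x x) * (cnj (r a) * r b)"
  show ?case
  proof (intro exI conjI ballI)
    have "psd (insert x ?U) ?M"
      using M'(1) fin(3) psd_diag_nonneg[OF _ PA, of x] fin(1)
      by (intro psd_add psd_zero_extend psd_rank_one inverse_nonneg_complex) auto
    then show "psd (I1 \<union> insert x J \<union> I2) ?M" by simp
  next
    fix a b assume "a \<in> I1 \<union> insert x J" "b \<in> I1 \<union> insert x J"
    then have a: "a \<in> insert x ?U1" and b: "b \<in> insert x ?U1" by auto
    show "?M a b = A a b"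
      using psd_pivot[OF fin(1) x(1) PA a b] M'(2) a b x by (auto simp: r_def)
  next
    fix a b assume "a \<in> insert x J \<union> I2" "b \<in> insert x J \<union> I2"
    then have a: "a \<in> insert x ?U2" and b: "b \<in> insert x ?U2" by auto
    show "?M a b = B a b"
      using psd_pivot[OF fin(2) x(2) PB a b] M'(3) a b x by (auto simp: rB d)
  qed
qed

lemma psd_block_toeplitz_shift:
  fixes \<tau> :: "nat \<Rightarrow> nat \<Rightarrow> int \<Rightarrow> complex"
  assumes "psd ({..<p} \<times> {..<n}) (\<lambda>(i, k) (j, l). \<tau> i j (int k - int l))"
  shows "psd ({..<p} \<times> {c..<c + n}) (\<lambda>(i, a) (j, b). \<tau> i j (int a - int b))"
proof -
  have "psd ({..<p} \<times> {c..<c + n}) (\<lambda>x y. (\<lambda>(i, k) (j, l). \<tau> i j (int k - int l))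
      ((\<lambda>(i, a). (i, a - c)) x) ((\<lambda>(i, a). (i, a - c)) y))"
    by (intro psd_pullback[OF _ assms]) auto
  then show ?thesis by (rule iffD1[OF psd_cong, rotated]) (auto simp: of_nat_diff)
qed

text \<open>Each new index is glued on through a translated copy of the given matrix; the
  extension is in general no longer Toeplitz.\<close>
lemma psd_block_toeplitz_band_extension:
  fixes \<tau> :: "nat \<Rightarrow> nat \<Rightarrow> int \<Rightarrow> complex"
  assumes n: "0 < n" and P: "psd ({..<p} \<times> {..<n}) (\<lambda>(i, k) (j, l). \<tau> i j (int k - int l))"
    and "n \<le> N"
  shows "\<exists>M. psd ({..<p} \<times> {..<N}) M \<and> (\<forall>i<p. \<forall>j<p. \<forall>a<N. \<forall>b<N.
      \<bar>int a - int b\<bar> < int n \<longrightarrow> M (i, a) (j, b) = \<tau> i j (int a - int b))"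
  using \<open>n \<le> N\<close>
proof (induction N rule: dec_induct)
  case base
  show ?case using P by (intro exI[of _ "\<lambda>(i, k) (j, l). \<tau> i j (int k - int l)"]) auto
next
  case (step N)
  obtain M1 where M1: "psd ({..<p} \<times> {..<N}) M1" "\<forall>i<p. \<forall>j<p. \<forall>a<N. \<forall>b<N.
      \<bar>int a - int b\<bar> < int n \<longrightarrow> M1 (i, a) (j, b) = \<tau> i j (int a - int b)"
    using step.IH by blast
  define c where "c = Suc N - n"
  have c: "c \<le> N" "c + n = Suc N" using n step.hyps unfolding c_def by auto
  let ?I1 = "{..<p} \<times> {..<c}" and ?J = "{..<p} \<times> {c..<N}" and ?I2 = "{..<p} \<times> {N}"
  let ?B = "\<lambda>(i, a) (j, b). \<tau> i j (int a - int b)"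
  have U1: "?I1 \<union> ?J = {..<p} \<times> {..<N}" and U2: "?J \<union> ?I2 = {..<p} \<times> {c..<c + n}"
    and U: "?I1 \<union> ?J \<union> ?I2 = {..<p} \<times> {..<Suc N}"
    using c by auto
  have PB: "psd (?J \<union> ?I2) ?B"
    unfolding U2 by (rule psd_block_toeplitz_shift[OF P])
  have "\<exists>M. psd (?I1 \<union> ?J \<union> ?I2) M \<and> (\<forall>x\<in>?I1 \<union> ?J. \<forall>y\<in>?I1 \<union> ?J. M x y = M1 x y)
      \<and> (\<forall>x\<in>?J \<union> ?I2. \<forall>y\<in>?J \<union> ?I2. M x y = ?B x y)"
  proof (rule psd_glue)
    show "psd (?I1 \<union> ?J) M1" using M1(1) U1 by simp
    show "\<forall>x\<in>?J. \<forall>y\<in>?J. M1 x y = ?B x y" using M1(2) c by auto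
  qed (use PB c in auto)
  then obtain M where M: "psd (?I1 \<union> ?J \<union> ?I2) M"
      "\<forall>x\<in>?I1 \<union> ?J. \<forall>y\<in>?I1 \<union> ?J. M x y = M1 x y" "\<forall>x\<in>?J \<union> ?I2. \<forall>y\<in>?J \<union> ?I2. M x y = ?B x y"
    by blast
  show ?case
  proof (intro exI conjI allI impI)
    show "psd ({..<p} \<times> {..<Suc N}) M" using M(1) U by simp
    fix i j a b assume i: "i < p" and j: "j < p" and a: "a < Suc N" and b: "b < Suc N"
      and ab: "\<bar>int a - int b\<bar> < int n"
    show "M (i, a) (j, b) = \<tau> i j (int a - int b)"
    proof (cases "a < N \<and> b < N")
      case True
      then show ?thesis using M(2) M1(2) i j ab U1 by auto
    next
      case False
      then have "c \<le> a" "c \<le> b" using a b ab c by auto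
      then show ?thesis using M(3) U2 i j a b c(2) by auto
    qed
  qed
qed

section \<open>Trigonometric polynomials\<close>

definition trig_freqs :: "nat \<Rightarrow> int set" where
  "trig_freqs n = {-(int n - 1)..int n - 1}"

lemma mem_trig_freqs: "k \<in> trig_freqs n \<longleftrightarrow> \<bar>k\<bar> < int n"
  unfolding trig_freqs_def by auto

lemma finite_trig_freqs [simp]: "finite (trig_freqs n)"
  by (simp add: trig_freqs_def)

lemma uminus_mem_trig_freqs [simp]: "- k \<in> trig_freqs n \<longleftrightarrow> k \<in> trig_freqs n"
  by (simp add: mem_trig_freqs)

lemma trig_freqs_0 [simp]: "trig_freqs 0 = {}"
  by (simp add: trig_freqs_def)

definition has_trig_coeffs :: "nat \<Rightarrow> (complex \<Rightarrow> complex) \<Rightarrow> (int \<Rightarrow> complex) \<Rightarrow> bool" where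
  "has_trig_coeffs n f \<alpha> \<longleftrightarrow>
     (\<forall>z. f z = (if cmod z = 1 then (\<Sum>k\<in>trig_freqs n. \<alpha> k * z powi k) else 0))"

lemma trigpoly_iff: "f \<in> trigpoly n \<longleftrightarrow> (\<exists>\<alpha>. has_trig_coeffs n f \<alpha>)"
  unfolding trigpoly_def has_trig_coeffs_def trig_freqs_def by simp

lemma has_trig_coeffs_lincomb:
  assumes "has_trig_coeffs n f \<alpha>" "has_trig_coeffs n g \<beta>"
  shows "has_trig_coeffs n (\<lambda>z. a * f z + b * g z) (\<lambda>k. a * \<alpha> k + b * \<beta> k)"
  using assms unfolding has_trig_coeffs_def
  by (simp add: algebra_simps sum.distrib sum_distrib_left)

lemma trigpoly_lincomb:
  "f \<in> trigpoly n \<Longrightarrow> g \<in> trigpoly n \<Longrightarrow> (\<lambda>z. a * f z + b * g z) \<in> trigpoly n"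
  unfolding trigpoly_iff using has_trig_coeffs_lincomb by blast

lemma cis_int_has_integral:
  "((\<lambda>\<theta>. cis (of_int k * \<theta>)) has_integral (if k = 0 then of_real (2 * pi) else 0)) {0..2 * pi}"
proof (cases "k = 0")
  case True
  then show ?thesis
    using has_integral_const_real[of "1::complex" 0 "2 * pi"] by (simp add: scaleR_conv_of_real)
next
  case False
  define c where "c = inverse (of_int k * \<i>)"
  have "((\<lambda>\<theta>. cis (of_int k * \<theta>) * c) has_vector_derivative cis (of_int k * \<theta>)) (at \<theta> within S)"
    for \<theta> S
  proof -
    have "((\<lambda>\<theta>. cis (of_int k * \<theta>)) has_derivative (\<lambda>t. (of_int k * t) *\<^sub>R (\<i> * cis (of_int k * \<theta>))))
        (at \<theta> within S)"
      by (intro has_derivative_cis derivative_intros)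
    then show ?thesis
      using False unfolding has_vector_derivative_def
      by (intro has_derivative_mult_left[THEN has_derivative_eq_rhs])
        (auto simp: fun_eq_iff scaleR_conv_of_real c_def field_simps)
  qed
  then have "((\<lambda>\<theta>. cis (of_int k * \<theta>)) has_integral
      cis (of_int k * (2 * pi)) * c - cis (of_int k * 0) * c) {0..2 * pi}"
    by (intro fundamental_theorem_of_calculus) auto
  moreover have "cis (of_int k * (2 * pi)) = 1"
    using cis_multiple_2pi[of "of_int k"] by (simp add: ac_simps)
  ultimately show ?thesis using False by simp
qed

lemma fourier_coeff_trig:
  assumes "has_trig_coeffs n f \<alpha>"
  shows "fourier_coeff f m = (if m \<in> trig_freqs n then \<alpha> m else 0)"
proof -
  have "f (cis \<theta>) * cis (- (of_int m * \<theta>)) = (\<Sum>k\<in>trig_freqs n. \<alpha> k * cis (of_int (k - m) * \<theta>))"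
    for \<theta>
  proof -
    have "f (cis \<theta>) = (\<Sum>k\<in>trig_freqs n. \<alpha> k * cis (of_int k * \<theta>))"
      using assms by (simp add: has_trig_coeffs_def cis_power_int)
    moreover have "cis (- (of_int m * \<theta>)) * cis (of_int k * \<theta>) = cis (of_int (k - m) * \<theta>)" for k
      by (simp add: cis_mult algebra_simps)
    ultimately show ?thesis
      by (simp add: sum_distrib_right mult.assoc mult.commute[of "cis (- _)"])
  qed
  moreover have "((\<lambda>\<theta>. \<Sum>k\<in>trig_freqs n. \<alpha> k * cis (of_int (k - m) * \<theta>)) has_integral
      (\<Sum>k\<in>trig_freqs n. \<alpha> k * (if k - m = 0 then of_real (2 * pi) else 0))) {0..2 * pi}"
    by (intro has_integral_sum has_integral_mult_right cis_int_has_integral) simp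
  moreover have "(\<Sum>k\<in>trig_freqs n. \<alpha> k * (if k - m = 0 then of_real (2 * pi) else 0)) =
      (\<Sum>k\<in>trig_freqs n. if k = m then of_real (2 * pi) * \<alpha> k else 0)"
    by (intro sum.cong) auto
  ultimately show ?thesis
    unfolding fourier_coeff_def by (simp add: integral_unique sum.delta)
qed

lemma cnj_powi_unit: "cmod z = 1 \<Longrightarrow> cnj (z powi m) = z powi (- m)"
  using divide_conv_cnj[of z 1] by (simp add: power_int_minus divide_inverse flip: power_int_inverse)

text \<open>The average over the \<open>L\<close>-th roots of unity replaces the integral over the circle; it is
  exact on trigonometric polynomials of degree \<open>< L\<close>.\<close>
definition root_avg :: "nat \<Rightarrow> (complex \<Rightarrow> complex) \<Rightarrow> complex" where
  "root_avg L F = (\<Sum>r<L. F (cis (2 * pi * real r / real L))) / of_nat L"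

lemma root_avg_cong: "(\<And>z. cmod z = 1 \<Longrightarrow> F z = G z) \<Longrightarrow> root_avg L F = root_avg L G"
  unfolding root_avg_def by simp

lemma root_avg_sum: "root_avg L (\<lambda>z. \<Sum>x\<in>S. F x z) = (\<Sum>x\<in>S. root_avg L (F x))"
  unfolding root_avg_def by (simp add: sum.swap[of _ S] sum_divide_distrib)

lemma root_avg_cmult: "root_avg L (\<lambda>z. c * F z) = c * root_avg L F"
  unfolding root_avg_def by (simp add: sum_distrib_left)

lemma root_avg_powi:
  assumes "0 < L" "\<bar>e\<bar> < int L"
  shows "root_avg L (\<lambda>z. z powi e) = (if e = 0 then 1 else 0)"
proof (cases "e = 0")
  case True
  with assms show ?thesis by (simp add: root_avg_def)
next
  case False
  define w where "w = cis (2 * pi * of_int e / real L)"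
  have "w \<noteq> 1"
  proof
    assume "w = 1"
    then obtain k :: int where "2 * pi * of_int e / real L = of_int k * 2 * pi"
      unfolding w_def by (metis cis.sel(1) one_complex.sel(1) cos_one_2pi_int)
    with assms(1) have "e = k * int L"
      by (simp add: field_simps) (metis of_int_eq_iff of_int_mult of_int_of_nat_eq)
    with assms(2) False show False
      by (cases "k = 0") (auto simp: abs_mult mult_le_cancel_right1 dest: zero_less_abs_iff[THEN iffD2])
  qed
  moreover have "w ^ L = cis (2 * pi * of_int e)"
    unfolding w_def Complex.DeMoivre using assms(1) by simp
  then have "w ^ L = 1" by simp
  moreover have "cis (2 * pi * real r / real L) powi e = w ^ r" for r
    by (simp add: w_def cis_power_int Complex.DeMoivre field_simps)
  ultimately show ?thesis
    using False by (simp add: root_avg_def geometric_sum)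
qed

lemma psd_root_avg:
  assumes "\<And>z. cmod z = 1 \<Longrightarrow> psd I (F z)"
  shows "psd I (\<lambda>a b. root_avg L (\<lambda>z. F z a b))"
proof (rule psdI)
  fix v
  have "quad_form I (\<lambda>a b. root_avg L (\<lambda>z. F z a b)) v
      = inverse (of_nat L) * (\<Sum>r<L. quad_form I (F (cis (2 * pi * real r / real L))) v)"
    unfolding root_avg_def divide_inverse mult.commute[of _ "inverse _"] quad_form_scale quad_form_sum ..
  also have "0 \<le> \<dots>"
    by (intro mult_nonneg_nonneg sum_nonneg psdD assms) (auto simp: less_eq_complex_def)
  finally show "0 \<le> quad_form I (\<lambda>a b. root_avg L (\<lambda>z. F z a b)) v" .
qed

lemma root_avg_trig_coeff:
  assumes "has_trig_coeffs n g \<alpha>" "\<bar>m\<bar> + int n < int L"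
  shows "root_avg L (\<lambda>z. g z * z powi - m) = (if m \<in> trig_freqs n then \<alpha> m else 0)"
proof -
  have "root_avg L (\<lambda>z. g z * z powi - m) = root_avg L (\<lambda>z. \<Sum>s\<in>trig_freqs n. \<alpha> s * z powi (s - m))"
  proof (rule root_avg_cong)
    fix z :: complex assume z: "cmod z = 1"
    then have "z \<noteq> 0" by auto
    then have "z powi s * z powi - m = z powi (s - m)" for s
      using power_int_add[of z s "- m"] by simp
    with assms(1) z show "g z * z powi - m = (\<Sum>s\<in>trig_freqs n. \<alpha> s * z powi (s - m))"
      by (simp add: has_trig_coeffs_def sum_distrib_right mult.assoc)
  qed
  also have "\<dots> = (\<Sum>s\<in>trig_freqs n. if s = m then \<alpha> s else 0)"
    unfolding root_avg_sum root_avg_cmult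
    using assms(2) by (intro sum.cong refl) (auto simp: root_avg_powi mem_trig_freqs)
  finally show ?thesis by (simp add: sum.delta)
qed

lemma psd_block_toeplitz_of_pos_trig:
  fixes G :: "nat \<Rightarrow> nat \<Rightarrow> complex \<Rightarrow> complex"
  assumes \<alpha>: "\<And>k l. k < q \<Longrightarrow> l < q \<Longrightarrow> has_trig_coeffs n (G k l) (\<alpha> k l)"
    and pos: "\<And>z. cmod z = 1 \<Longrightarrow> psd {..<q} (\<lambda>k l. G k l z)"
  shows "psd ({..<N} \<times> {..<q}) (\<lambda>(a, k) (b, l).
    if int b - int a \<in> trig_freqs n then \<alpha> k l (int b - int a) else 0)"
proof -
  define F where "F z = (\<lambda>(a, k) (b, l). G k l z * z powi - (int b - int a))" for z
  have entry: "root_avg (Suc (N + n)) (\<lambda>z. F z (a, k) (b, l)) =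
      (if int b - int a \<in> trig_freqs n then \<alpha> k l (int b - int a) else 0)"
    if "a < N" "b < N" "k < q" "l < q" for a b k l
    unfolding F_def prod.case using that by (intro root_avg_trig_coeff \<alpha>) auto
  have "psd ({..<N} \<times> {..<q}) (\<lambda>x y. root_avg (Suc (N + n)) (\<lambda>z. F z x y))"
  proof (rule psd_root_avg)
    fix z :: complex assume z: "cmod z = 1"
    have "psd ({..<N} \<times> {..<q}) (\<lambda>x y. G (snd x) (snd y) z)"
      by (rule psd_pullback[OF finite_lessThan pos[OF z]]) auto
    from psd_diag_scale[OF this, of "\<lambda>x. z powi - int (fst x)"]
    show "psd ({..<N} \<times> {..<q}) (F z)"
    proof (rule iffD1[OF psd_cong, rotated])
      fix x y :: "nat \<times> nat"
      have "z \<noteq> 0" using z by auto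
      then have "z powi int (fst x) * z powi - int (fst y) = z powi - (int (fst y) - int (fst x))"
        using power_int_add[of z "int (fst x)" "- int (fst y)"] by simp
      then show "cnj (z powi - int (fst x)) * G (snd x) (snd y) z * z powi - int (fst y) = F z x y"
        unfolding cnj_powi_unit[OF z] by (simp add: F_def case_prod_beta' ac_simps)
    qed
  qed
  then show ?thesis
    by (rule iffD1[OF psd_cong, rotated]) (auto simp: entry)
qed

lemma double_sum_index_diff:
  fixes F :: "int \<Rightarrow> complex"
  assumes "finite S" and supp: "\<And>m. m \<notin> S \<Longrightarrow> F m = 0"
  shows "(\<Sum>a<N. \<Sum>b<N. F (int a - int b)) = (\<Sum>m\<in>S. of_nat (N - nat \<bar>m\<bar>) * F m)"
proof (induction N)
  case 0
  then show ?case by simp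
next
  case (Suc N)
  have split: "(\<Sum>a<Suc N. \<Sum>b<Suc N. F (int a - int b)) = (\<Sum>a<N. \<Sum>b<N. F (int a - int b))
      + ((\<Sum>a<N. F (int a - int N)) + (\<Sum>b<N. F (int N - int b)) + F 0)"
    by (simp add: sum.distrib)
  have neg: "(\<Sum>a<N. F (int a - int N)) = (\<Sum>m\<in>{-int N..-1}. F m)"
    by (rule sum.reindex_bij_witness[where i = "\<lambda>m. nat (m + int N)" and j = "\<lambda>a. int a - int N"]) auto
  have pos: "(\<Sum>b<N. F (int N - int b)) = (\<Sum>m\<in>{1..int N}. F m)"
    by (rule sum.reindex_bij_witness[where i = "\<lambda>m. nat (int N - m)" and j = "\<lambda>b. int N - int b"]) auto
  have "{-int N..int N} = {-int N..-1} \<union> ({0} \<union> {1..int N})" by auto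
  then have all: "(\<Sum>m\<in>{-int N..int N}. F m) = (\<Sum>m\<in>{-int N..-1}. F m) + (F 0 + (\<Sum>m\<in>{1..int N}. F m))"
    by (simp add: sum.union_disjoint)
  have "(\<Sum>m\<in>{-int N..int N}. F m) = (\<Sum>m\<in>{-int N..int N} \<inter> S. F m)"
    by (rule sum.mono_neutral_right) (auto simp: supp)
  also have "\<dots> = (\<Sum>m\<in>S. if nat \<bar>m\<bar> \<le> N then F m else 0)"
    using \<open>finite S\<close> by (simp add: sum.inter_restrict Int_commute) (intro sum.cong; auto)
  finally have band: "(\<Sum>m\<in>{-int N..int N}. F m) = (\<Sum>m\<in>S. if nat \<bar>m\<bar> \<le> N then F m else 0)" .
  have "(\<Sum>m\<in>S. of_nat (Suc N - nat \<bar>m\<bar>) * F m) =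
      (\<Sum>m\<in>S. of_nat (N - nat \<bar>m\<bar>) * F m) + (\<Sum>m\<in>S. if nat \<bar>m\<bar> \<le> N then F m else 0)"
    unfolding sum.distrib[symmetric] by (intro sum.cong refl) (auto simp: Suc_diff_le distrib_right)
  then show ?case
    unfolding split Suc.IH band[symmetric] all neg pos by (simp add: ac_simps)
qed

lemma psd_toeplitz_trig_pairing_fejer:
  fixes \<tau> :: "nat \<Rightarrow> nat \<Rightarrow> int \<Rightarrow> complex" and G :: "nat \<Rightarrow> nat \<Rightarrow> complex \<Rightarrow> complex"
  assumes "0 < n" "n \<le> N"
    and T: "psd ({..<p} \<times> {..<n}) (\<lambda>(i, k) (j, l). \<tau> i j (int k - int l))"
    and \<alpha>: "\<And>k l. k < q \<Longrightarrow> l < q \<Longrightarrow> has_trig_coeffs n (G k l) (\<alpha> k l)"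
    and pos: "\<And>z. cmod z = 1 \<Longrightarrow> psd {..<q} (\<lambda>k l. G k l z)"
  shows "psd ({..<p} \<times> {..<q})
    (\<lambda>(i, k) (j, l). \<Sum>m\<in>trig_freqs n. of_nat (N - nat \<bar>m\<bar>) * (\<tau> i j m * \<alpha> k l (- m)))"
proof -
  define \<alpha>' where "\<alpha>' k l m = (if m \<in> trig_freqs n then \<alpha> k l m else 0)" for k l m
  obtain M where M: "psd ({..<p} \<times> {..<N}) M" and band: "\<forall>i<p. \<forall>j<p. \<forall>a<N. \<forall>b<N.
      \<bar>int a - int b\<bar> < int n \<longrightarrow> M (i, a) (j, b) = \<tau> i j (int a - int b)"
    using psd_block_toeplitz_band_extension[OF assms(1) T assms(2)] by auto
  have Tq: "psd ({..<N} \<times> {..<q}) (\<lambda>(a, k) (b, l). \<alpha>' k l (int b - int a))"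
    using psd_block_toeplitz_of_pos_trig[OF \<alpha> pos] unfolding \<alpha>'_def by blast
  let ?I = "({..<p} \<times> {..<q}) \<times> {..<N}"
  have "psd ?I (\<lambda>x y. M ((\<lambda>((i, k), a). (i, a)) x) ((\<lambda>((i, k), a). (i, a)) y))"
    by (rule psd_pullback[OF _ M]) auto
  moreover have "psd ?I (\<lambda>x y. (\<lambda>(a, k) (b, l). \<alpha>' k l (int b - int a))
      ((\<lambda>((i, k), a). (a, k)) x) ((\<lambda>((i, k), a). (a, k)) y))"
    by (rule psd_pullback[OF _ Tq]) auto
  ultimately have "psd ?I (\<lambda>((i, k), a) ((j, l), b). M (i, a) (j, b) * \<alpha>' k l (int b - int a))"
    by (auto dest: psd_schur_product[rotated] simp: case_prod_beta')
  from psd_partial_trace[OF this]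
  have trace: "psd ({..<p} \<times> {..<q}) (\<lambda>(i, k) (j, l).
      \<Sum>a<N. \<Sum>b<N. M (i, a) (j, b) * \<alpha>' k l (int b - int a))"
    by (simp add: case_prod_beta')
  have fejer: "(\<Sum>a<N. \<Sum>b<N. M (i, a) (j, b) * \<alpha>' k l (int b - int a)) =
      (\<Sum>m\<in>trig_freqs n. of_nat (N - nat \<bar>m\<bar>) * (\<tau> i j m * \<alpha> k l (- m)))"
    if "i < p" "j < p" for i j k l
  proof -
    have "(\<Sum>a<N. \<Sum>b<N. M (i, a) (j, b) * \<alpha>' k l (int b - int a)) =
        (\<Sum>a<N. \<Sum>b<N. \<tau> i j (int a - int b) * \<alpha>' k l (- (int a - int b)))"
      using band that by (intro sum.cong refl) (auto simp: \<alpha>'_def mem_trig_freqs)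
    also have "\<dots> = (\<Sum>m\<in>trig_freqs n. of_nat (N - nat \<bar>m\<bar>) * (\<tau> i j m * \<alpha>' k l (- m)))"
      by (rule double_sum_index_diff) (auto simp: \<alpha>'_def)
    finally show ?thesis by (simp add: \<alpha>'_def)
  qed
  show ?thesis using trace by (rule iffD1[OF psd_cong, rotated]) (auto simp: fejer)
qed

lemma psd_toeplitz_trig_pairing:
  fixes \<tau> :: "nat \<Rightarrow> nat \<Rightarrow> int \<Rightarrow> complex" and G :: "nat \<Rightarrow> nat \<Rightarrow> complex \<Rightarrow> complex"
  assumes T: "psd ({..<p} \<times> {..<n}) (\<lambda>(i, k) (j, l). \<tau> i j (int k - int l))"
    and \<alpha>: "\<And>k l. k < q \<Longrightarrow> l < q \<Longrightarrow> has_trig_coeffs n (G k l) (\<alpha> k l)"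
    and pos: "\<And>z. cmod z = 1 \<Longrightarrow> psd {..<q} (\<lambda>k l. G k l z)"
  shows "psd ({..<p} \<times> {..<q}) (\<lambda>(i, k) (j, l). \<Sum>m\<in>trig_freqs n. \<tau> i j m * \<alpha> k l (- m))"
proof (cases "n = 0")
  case True
  then show ?thesis by (simp add: case_prod_beta')
next
  case False
  let ?E = "\<lambda>(i, k) (j, l). \<Sum>m\<in>trig_freqs n. \<tau> i j m * \<alpha> k l (- m)"
  let ?R = "\<lambda>(i, k) (j, l). \<Sum>m\<in>trig_freqs n. of_nat (nat \<bar>m\<bar>) * (\<tau> i j m * \<alpha> k l (- m))"
  show ?thesis
  proof (rule psd_of_linear_bound[where B = ?R])
    fix N assume N: "n \<le> N"
    have "(\<Sum>m\<in>trig_freqs n. of_nat (N - nat \<bar>m\<bar>) * c m) =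
        of_nat N * (\<Sum>m\<in>trig_freqs n. c m) - (\<Sum>m\<in>trig_freqs n. of_nat (nat \<bar>m\<bar>) * c m)"
      for c :: "int \<Rightarrow> complex"
    proof -
      have "(\<Sum>m\<in>trig_freqs n. of_nat (N - nat \<bar>m\<bar>) * c m) =
          (\<Sum>m\<in>trig_freqs n. of_nat N * c m - of_nat (nat \<bar>m\<bar>) * c m)"
        using N by (intro sum.cong refl) (auto simp: mem_trig_freqs of_nat_diff left_diff_distrib)
      then show ?thesis by (simp add: sum_subtractf sum_distrib_left)
    qed
    with psd_toeplitz_trig_pairing_fejer[OF _ N T \<alpha> pos] False
    show "psd ({..<p} \<times> {..<q}) (\<lambda>x y. of_nat N * ?E x y - ?R x y)"
      by (auto simp: case_prod_beta')
  qed
qed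

section \<open>The isomorphism\<close>

definition toeplitz_symbol :: "(nat \<Rightarrow> nat \<Rightarrow> complex) \<Rightarrow> int \<Rightarrow> complex" where
  "toeplitz_symbol A m = (if 0 \<le> m then A (nat m) 0 else A 0 (nat (- m)))"

lemma toeplitz_symbol_eq:
  assumes "A \<in> toeplitz n" "k < n" "l < n"
  shows "toeplitz_symbol A (int k - int l) = A k l"
proof -
  obtain \<sigma> where "\<forall>k l. A k l = (if k < n \<and> l < n then \<sigma> (int k - int l) else 0)"
    using assms(1) unfolding toeplitz_def by blast
  with assms(2,3) show ?thesis
    by (cases "l \<le> k") (auto simp: toeplitz_symbol_def nat_diff_distrib' of_nat_diff less_imp_diff_less)
qed

lemma toeplitz_zero_outside: "A \<in> toeplitz n \<Longrightarrow> \<not> (k < n \<and> l < n) \<Longrightarrow> A k l = 0"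
  unfolding toeplitz_def by auto

definition toeplitz_functional :: "nat \<Rightarrow> (nat \<Rightarrow> nat \<Rightarrow> complex) \<Rightarrow> (complex \<Rightarrow> complex) \<Rightarrow> complex"
  where "toeplitz_functional n A f = (if f \<in> trigpoly n
    then \<Sum>m\<in>trig_freqs n. toeplitz_symbol A m * fourier_coeff f (- m) else 0)"

lemma toeplitz_functional_coeffs:
  assumes "has_trig_coeffs n f \<alpha>"
  shows "toeplitz_functional n A f = (\<Sum>m\<in>trig_freqs n. toeplitz_symbol A m * \<alpha> (- m))"
  using assms unfolding toeplitz_functional_def trigpoly_iff
  by (auto simp: fourier_coeff_trig[OF assms])

definition trig_monomial :: "int \<Rightarrow> complex \<Rightarrow> complex" where
  "trig_monomial j z = (if cmod z = 1 then z powi j else 0)"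

lemma has_trig_coeffs_monomial:
  "j \<in> trig_freqs n \<Longrightarrow> has_trig_coeffs n (trig_monomial j) (\<lambda>k. if k = j then 1 else 0)"
  unfolding has_trig_coeffs_def trig_monomial_def
  by (simp add: if_distrib[of "\<lambda>x. x * _"] cong: if_cong)

lemma trig_monomial_in_trigpoly: "j \<in> trig_freqs n \<Longrightarrow> trig_monomial j \<in> trigpoly n"
  using has_trig_coeffs_monomial trigpoly_iff by blast

lemma toeplitz_functional_monomial:
  assumes "j \<in> trig_freqs n"
  shows "toeplitz_functional n A (trig_monomial j) = toeplitz_symbol A (- j)"
proof -
  have "toeplitz_functional n A (trig_monomial j) =
      (\<Sum>m\<in>trig_freqs n. toeplitz_symbol A m * (if - m = j then 1 else 0))"
    by (rule toeplitz_functional_coeffs[OF has_trig_coeffs_monomial[OF assms]])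
  also have "\<dots> = (\<Sum>m\<in>trig_freqs n. if m = - j then toeplitz_symbol A m else 0)"
    by (intro sum.cong) auto
  finally show ?thesis using assms by (simp add: sum.delta)
qed

lemma toeplitz_functional_lincomb:
  "toeplitz_functional n (\<lambda>k l. a * A k l + b * B k l) =
    (\<lambda>f. a * toeplitz_functional n A f + b * toeplitz_functional n B f)"
proof -
  have "toeplitz_symbol (\<lambda>k l. a * A k l + b * B k l) m = a * toeplitz_symbol A m + b * toeplitz_symbol B m"
    for m by (simp add: toeplitz_symbol_def)
  then show ?thesis
    by (simp add: fun_eq_iff toeplitz_functional_def sum.distrib sum_distrib_left algebra_simps)
qed

lemma toeplitz_functional_in_trig_dual: "toeplitz_functional n A \<in> trig_dual n"
  unfolding trig_dual_def
proof (intro CollectI conjI ballI allI impI)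
  fix f g a b assume "f \<in> trigpoly n" "g \<in> trigpoly n"
  then obtain \<alpha> \<beta> where \<alpha>: "has_trig_coeffs n f \<alpha>" and \<beta>: "has_trig_coeffs n g \<beta>"
    by (auto simp: trigpoly_iff)
  show "toeplitz_functional n A (\<lambda>z. a * f z + b * g z) =
      a * toeplitz_functional n A f + b * toeplitz_functional n A g"
    unfolding toeplitz_functional_coeffs[OF has_trig_coeffs_lincomb[OF \<alpha> \<beta>]]
      toeplitz_functional_coeffs[OF \<alpha>] toeplitz_functional_coeffs[OF \<beta>]
    by (simp add: sum.distrib sum_distrib_left algebra_simps)
qed (simp add: toeplitz_functional_def)

lemma toeplitz_functional_id_mat: "toeplitz_functional n (id_mat n) = fourier_state n"
proof
  fix f
  show "toeplitz_functional n (id_mat n) f = fourier_state n f"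
  proof (cases "f \<in> trigpoly n")
    case True
    then obtain \<alpha> where \<alpha>: "has_trig_coeffs n f \<alpha>" by (auto simp: trigpoly_iff)
    have "toeplitz_symbol (id_mat n) m = (if m = 0 \<and> 0 < n then 1 else 0)" for m
      by (auto simp: toeplitz_symbol_def id_mat_def)
    then have "toeplitz_functional n (id_mat n) f = (if 0 \<in> trig_freqs n then \<alpha> 0 else 0)"
      by (simp add: toeplitz_functional_coeffs[OF \<alpha>] if_distrib[of "\<lambda>x. x * _"] sum.delta
          mem_trig_freqs cong: if_cong)
    then show ?thesis
      using True by (simp add: fourier_state_def fourier_coeff_trig[OF \<alpha>])
  qed (simp add: toeplitz_functional_def fourier_state_def)
qed

lemma trig_dual_lincomb:
  "\<psi> \<in> trig_dual n \<Longrightarrow> f \<in> trigpoly n \<Longrightarrow> g \<in> trigpoly n \<Longrightarrow>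
    \<psi> (\<lambda>z. a * f z + b * g z) = a * \<psi> f + b * \<psi> g"
  by (simp add: trig_dual_def)

lemma trig_dual_sum:
  assumes "\<psi> \<in> trig_dual n" "finite S" "\<And>x. x \<in> S \<Longrightarrow> h x \<in> trigpoly n"
  shows "(\<lambda>z. \<Sum>x\<in>S. c x * h x z) \<in> trigpoly n \<and>
    \<psi> (\<lambda>z. \<Sum>x\<in>S. c x * h x z) = (\<Sum>x\<in>S. c x * \<psi> (h x))"
  using assms(2,3)
proof (induction S rule: finite_induct)
  case empty
  have zero: "(\<lambda>z. 0) \<in> trigpoly n"
    unfolding trigpoly_iff has_trig_coeffs_def by (intro exI[of _ "\<lambda>k. 0"]) simp
  with trig_dual_lincomb[OF assms(1) zero zero, of 0 0] show ?case by simp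
next
  case (insert x S)
  let ?g = "\<lambda>z. \<Sum>x\<in>S. c x * h x z"
  have IH: "?g \<in> trigpoly n" "\<psi> ?g = (\<Sum>x\<in>S. c x * \<psi> (h x))" and hx: "h x \<in> trigpoly n"
    using insert by auto
  with trig_dual_lincomb[OF assms(1) hx IH(1), of "c x" 1] trigpoly_lincomb[OF hx IH(1), of "c x" 1]
  show ?case using insert.hyps by simp
qed

lemma toeplitz_entry_eq_functional:
  assumes "A \<in> toeplitz n" "k < n" "l < n"
  shows "A k l = toeplitz_functional n A (trig_monomial (int l - int k))"
  using assms by (simp add: toeplitz_functional_monomial mem_trig_freqs toeplitz_symbol_eq)

lemma inj_on_toeplitz_functional: "inj_on (toeplitz_functional n) (toeplitz n)"
proof (rule inj_onI, rule ext, rule ext)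
  fix A B k l assume A: "A \<in> toeplitz n" and B: "B \<in> toeplitz n"
    and eq: "toeplitz_functional n A = toeplitz_functional n B"
  show "A k l = B k l"
    using toeplitz_entry_eq_functional[OF A] toeplitz_entry_eq_functional[OF B] eq
      toeplitz_zero_outside[OF A] toeplitz_zero_outside[OF B]
    by (cases "k < n \<and> l < n") auto
qed

lemma trig_dual_in_image_toeplitz_functional:
  assumes \<psi>: "\<psi> \<in> trig_dual n"
  shows "\<psi> \<in> toeplitz_functional n ` toeplitz n"
proof
  define A where "A k l = (if k < n \<and> l < n then \<psi> (trig_monomial (- (int k - int l))) else 0)" for k l
  show "A \<in> toeplitz n"
    unfolding toeplitz_def A_def by (intro CollectI exI[of _ "\<lambda>m. \<psi> (trig_monomial (- m))"]) simp
  show "\<psi> = toeplitz_functional n A"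
  proof
    fix f
    show "\<psi> f = toeplitz_functional n A f"
    proof (cases "f \<in> trigpoly n")
      case True
      then obtain \<alpha> where \<alpha>: "has_trig_coeffs n f \<alpha>" by (auto simp: trigpoly_iff)
      then have f: "f = (\<lambda>z. \<Sum>j\<in>trig_freqs n. \<alpha> j * trig_monomial j z)"
        by (auto simp: fun_eq_iff has_trig_coeffs_def trig_monomial_def)
      have "toeplitz_functional n A f = (\<Sum>m\<in>trig_freqs n. \<psi> (trig_monomial (- m)) * \<alpha> (- m))"
        unfolding toeplitz_functional_coeffs[OF \<alpha>]
        by (intro sum.cong refl) (auto simp: toeplitz_symbol_def A_def mem_trig_freqs)
      also have "\<dots> = (\<Sum>j\<in>trig_freqs n. \<alpha> j * \<psi> (trig_monomial j))"
        by (rule sum.reindex_bij_witness[where i = uminus and j = uminus]) auto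
      also have "\<dots> = \<psi> f"
        using trig_dual_sum[OF \<psi> finite_trig_freqs, where h = trig_monomial and c = \<alpha>] f
        by (simp add: trig_monomial_in_trigpoly)
      finally show ?thesis by simp
    qed (use \<psi> in \<open>simp add: trig_dual_def toeplitz_functional_def\<close>)
  qed
qed

lemma bij_betw_toeplitz_functional: "bij_betw (toeplitz_functional n) (toeplitz n) (trig_dual n)"
  using inj_on_toeplitz_functional toeplitz_functional_in_trig_dual
    trig_dual_in_image_toeplitz_functional
  by (intro bij_betw_imageI) blast+

lemma pos_dual_toeplitz_functional:
  assumes X: "\<forall>i<p. \<forall>j<p. X i j \<in> toeplitz n" and PT: "pos_toep n p X"
  shows "pos_dual n p (\<lambda>i j. toeplitz_functional n (X i j))"
  unfolding pos_dual_def
proof (intro allI impI)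
  fix q G assume G: "\<forall>k<q. \<forall>l<q. G k l \<in> trigpoly n" and PG: "pos_trig q G"
  define \<alpha> where "\<alpha> k l = (SOME \<alpha>. has_trig_coeffs n (G k l) \<alpha>)" for k l
  have \<alpha>: "has_trig_coeffs n (G k l) (\<alpha> k l)" if "k < q" "l < q" for k l
  proof -
    have "\<exists>\<alpha>. has_trig_coeffs n (G k l) \<alpha>" using G that by (auto simp: trigpoly_iff)
    then show ?thesis unfolding \<alpha>_def by (rule someI_ex)
  qed
  have "psd ({..<p} \<times> {..<n}) (\<lambda>(i, k) (j, l). toeplitz_symbol (X i j) (int k - int l))"
    using PT unfolding pos_toep_def
    by (rule iffD1[OF psd_cong, rotated]) (auto simp: toeplitz_symbol_eq[OF X[rule_format]])
  then have "psd ({..<p} \<times> {..<q})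
      (\<lambda>(i, k) (j, l). \<Sum>m\<in>trig_freqs n. toeplitz_symbol (X i j) m * \<alpha> k l (- m))"
    by (rule psd_toeplitz_trig_pairing[where G = G]) (use \<alpha> PG in \<open>auto simp: pos_trig_def\<close>)
  then show "psd ({..<p} \<times> {..<q}) (\<lambda>(i, k) (j, l). toeplitz_functional n (X i j) (G k l))"
    by (rule iffD1[OF psd_cong, rotated]) (auto simp: toeplitz_functional_coeffs[OF \<alpha>])
qed

lemma pos_toep_of_pos_dual:
  assumes X: "\<forall>i<p. \<forall>j<p. X i j \<in> toeplitz n"
    and PD: "pos_dual n p (\<lambda>i j. toeplitz_functional n (X i j))"
  shows "pos_toep n p X"
proof -
  define G where "G k l = trig_monomial (int l - int k)" for k l
  have freq: "int l - int k \<in> trig_freqs n" if "k < n" "l < n" for k l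
    using that by (auto simp: mem_trig_freqs)
  have PG: "pos_trig n G"
    unfolding pos_trig_def
  proof (intro allI impI)
    fix z :: complex assume z: "cmod z = 1"
    then have "z \<noteq> 0" by auto
    then have "cnj (z powi int k) * z powi int l = z powi (int l - int k)" for k l
      unfolding cnj_powi_unit[OF z] by (simp add: power_int_diff power_int_minus divide_inverse mult.commute)
    with psd_rank_one[of 1 "{..<n}" "\<lambda>k. z powi int k"] z show "psd {..<n} (\<lambda>k l. G k l z)"
      by (simp add: G_def trig_monomial_def less_eq_complex_def)
  qed
  have "psd ({..<p} \<times> {..<n}) (\<lambda>(i, k) (j, l). toeplitz_functional n (X i j) (G k l))"
    by (rule PD[unfolded pos_dual_def, rule_format, OF _ PG])
      (simp add: G_def freq trig_monomial_in_trigpoly)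
  then show ?thesis
    unfolding pos_toep_def
    by (rule iffD1[OF psd_cong, rotated]) (auto simp: G_def toeplitz_entry_eq_functional[OF X[rule_format]])
qed

theorem theorem3p1:
  fixes n :: nat
  shows "\<exists>\<phi>. unital_coi n \<phi>"
proof
  show "unital_coi n (toeplitz_functional n)"
    unfolding unital_coi_def
    using bij_betw_toeplitz_functional toeplitz_functional_lincomb toeplitz_functional_id_mat
      pos_dual_toeplitz_functional pos_toep_of_pos_dual by blast
qed

end
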